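(* Let $p\ge1$. Assume Assumption A1(p) and Assumption A2 (see context), and let $0<\eta_s\le\eta_{\infty,p}$ for all $s$. Then for every $t\ge1$, \[\mathbb E^{1/p}\big[\|\tilde\theta^{(\mathrm{tr})}_t\|^p\big]\le\exp\Big(-a\sum_{s=1}^t\eta_sH_s\Big)\|\theta_0-\theta_\star\|,\qquad\tilde\theta^{(\mathrm{tr})}_t=\prod_{s=1}^t\Gamma^{\mathrm{avg}}_s(\theta_0-\theta_\star).\]
   Context: Setting: $N$ agents, dimension $d$. For each agent $c$: distribution $\pi_c$ on $(\mathsf Z,\mathcal Z)$, measurable $\mathbf A^c:\mathsf Z\to\mathbb R^{d\times d}$, $\mathbf b^c:\mathsf Z\to\mathbb R^d$, $\bar{\mathbf A}^c=\mathbb E_{\pi_c}[\mathbf A^c(Z)]$, $\bar{\mathbf b}^c=\mathbb E_{\pi_c}[\mathbf b^c(Z)]$; $\theta_\star$ solves $(N^{-1}\sum_c\bar{\mathbf A}^c)\theta_\star=N^{-1}\sum_c\bar{\mathbf b}^c$; $\bar{\mathbf A}^c\theta^c_\star=\bar{\mathbf b}^c$; $\varepsilon^c(z)=(\mathbf A^c(z)-\bar{\mathbf A}^c)\theta^c_\star-(\mathbf b^c(z)-\bar{\mathbf b}^c)$. Assumption A1(p): each $-\bar{\mathbf A}^c$ Hurwitz; there exist $a>0,\eta_{\infty,p}>0$, $\eta_{\infty,p}a\le1/2$, with $\mathbb E^{1/p}_{Z\sim\pi_c}[\|(I-\eta\mathbf A^c(Z))u\|^p]\le(1-\eta a)\|u\|$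 for all $0<\eta<\eta_{\infty,p}$, $u$. Assumption A2: samples $Z^c_{s,h}$ ($1\le h\le H_s$) independent with $Z^c_{s,h}\sim\pi_c$; $\max_c\sup_z\|\varepsilon^c(z)\|<\infty$, $\max_c\sup_z\max(\|\mathbf A^c(z)\|,\|\mathbf A^c(z)-\bar{\mathbf A}^c\|)<\infty$. $H_s\in\mathbb N$; $\Gamma^c_s=(I-\eta_s\mathbf A^c(Z^c_{s,H_s}))\cdots(I-\eta_s\mathbf A^c(Z^c_{s,1}))$, $\Gamma^{\mathrm{avg}}_s=N^{-1}\sum_c\Gamma^c_s$, $\prod_{s=1}^t\Gamma^{\mathrm{avg}}_s=\Gamma^{\mathrm{avg}}_t\cdots\Gamma^{\mathrm{avg}}_1$; $\theta_0\in\mathbb R^d$ fixed. *)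

theory Defs
  imports "HOL-Probability.Probability"
begin

fun ordprod :: "nat \<Rightarrow> (nat \<Rightarrow> real^'d^'d) \<Rightarrow> real^'d^'d" where
  "ordprod 0 f = mat 1"
| "ordprod (Suc n) f = f (Suc n) ** ordprod n f"

definition hurwitz :: "real^'d^'d \<Rightarrow> bool" where
  "hurwitz M \<longleftrightarrow>
     (\<forall>z::complex. det (\<chi> i j. complex_of_real (M $ i $ j) - (if i = j then z else 0)) = 0
        \<longrightarrow> Re z < 0)"

definition Gamma_loc ::
  "(nat \<Rightarrow> real) \<Rightarrow> (nat \<Rightarrow> nat) \<Rightarrow> (nat \<Rightarrow> 'z \<Rightarrow> real^'d^'d)
   \<Rightarrow> (nat \<Rightarrow> nat \<Rightarrow> nat \<Rightarrow> 'w \<Rightarrow> 'z) \<Rightarrow> nat \<Rightarrow> nat \<Rightarrow> 'w \<Rightarrow> real^'d^'d" where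
  "Gamma_loc \<eta> H A Z c s \<omega> = ordprod (H s) (\<lambda>h. mat 1 - \<eta> s *\<^sub>R A c (Z c s h \<omega>))"

definition Gamma_avg ::
  "nat \<Rightarrow> (nat \<Rightarrow> real) \<Rightarrow> (nat \<Rightarrow> nat) \<Rightarrow> (nat \<Rightarrow> 'z \<Rightarrow> real^'d^'d)
   \<Rightarrow> (nat \<Rightarrow> nat \<Rightarrow> nat \<Rightarrow> 'w \<Rightarrow> 'z) \<Rightarrow> nat \<Rightarrow> 'w \<Rightarrow> real^'d^'d" where
  "Gamma_avg N \<eta> H A Z s \<omega> = (1 / real N) *\<^sub>R (\<Sum>c<N. Gamma_loc \<eta> H A Z c s \<omega>)"

end

theory Submission
  imports Defs
begin

text \<open>Each factor \<open>I - \<eta>\<^sub>s A\<^sup>c(Z)\<close> shrinks the \<open>p\<close>-th moment of every fixed vector by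
  \<open>(1 - \<eta>\<^sub>s a)\<^sup>p\<close> (assumption A1). A factor is independent of the partial product to its right,
  so integrating it out first, with the partial product frozen, multiplies these rates along the
  local products \<open>\<Gamma>\<^sup>c\<^sub>s\<close>. Convexity of \<open>\<parallel>\<cdot>\<parallel>\<^sup>p\<close> carries the bound over to the average \<open>\<Gamma>\<^sup>a\<^sup>v\<^sup>g\<^sub>s\<close>,
  the rounds are independent as well, and \<open>(1 - x)\<^sup>H \<le> exp (- x H)\<close> gives the exponential rate.\<close>

lemma continuous_on_matrix_vector_mult:
  "continuous_on UNIV (\<lambda>z::(real^'n^'m) \<times> (real^'n). fst z *v snd z)"
  unfolding matrix_vector_mult_def by (intro continuous_intros)

lemma continuous_on_matrix_matrix_mult:
  "continuous_on UNIV (\<lambda>z::(real^'n^'m) \<times> (real^'k^'n). fst z ** snd z)"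
  unfolding matrix_matrix_mult_def by (intro continuous_intros)

lemma borel_measurable_matrix_vector_mult[measurable (raw)]:
  fixes f :: "'a \<Rightarrow> real^'n^'m" and g :: "'a \<Rightarrow> real^'n"
  assumes "f \<in> borel_measurable M" "g \<in> borel_measurable M"
  shows "(\<lambda>x. f x *v g x) \<in> borel_measurable M"
  using borel_measurable_continuous_Pair[OF assms continuous_on_matrix_vector_mult] .

lemma borel_measurable_matrix_matrix_mult[measurable (raw)]:
  fixes f :: "'a \<Rightarrow> real^'n^'m" and g :: "'a \<Rightarrow> real^'k^'n"
  assumes "f \<in> borel_measurable M" "g \<in> borel_measurable M"
  shows "(\<lambda>x. f x ** g x) \<in> borel_measurable M"
  using borel_measurable_continuous_Pair[OF assms continuous_on_matrix_matrix_mult] .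

lemma norm_matrix_vector_mult_le: "norm ((A::real^'n^'m) *v x) \<le> norm A * norm x"
proof -
  have "norm (A *v x) = L2_set (\<lambda>i. norm ((A *v x) $ i)) UNIV"
    by (simp add: norm_vec_def)
  also have "\<dots> \<le> L2_set (\<lambda>i. norm (A $ i) * norm x) UNIV"
    by (rule L2_set_mono) (auto simp: matrix_mult_dot Cauchy_Schwarz_ineq2)
  also have "\<dots> = norm A * norm x"
    by (simp add: L2_set_right_distrib mult.commute norm_vec_def[of A])
  finally show ?thesis .
qed

lemma sum_matrix_vector_mult: "(\<Sum>c\<in>S. f c :: real^'n^'m) *v v = (\<Sum>c\<in>S. f c *v v)"
  by (induction S rule: infinite_finite_induct) (auto simp: matrix_vector_mult_add_rdistrib)

lemma id_minus_matrix_vector_mult: "(mat 1 - e *\<^sub>R B) *v u = u - e *\<^sub>R (B *v u)" for B :: "real^'n^'n"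
  by (simp add: matrix_vector_mult_diff_rdistrib flip: scaleR_matrix_vector_assoc)

lemma ordprod_cong: "(\<And>h. 1 \<le> h \<Longrightarrow> h \<le> n \<Longrightarrow> f h = g h) \<Longrightarrow> ordprod n f = ordprod n g"
  by (induction n) auto

lemma borel_measurable_ordprod:
  fixes f :: "nat \<Rightarrow> 'a \<Rightarrow> real^'d^'d"
  shows "(\<And>h. 1 \<le> h \<Longrightarrow> h \<le> n \<Longrightarrow> f h \<in> borel_measurable M)
    \<Longrightarrow> (\<lambda>x. ordprod n (\<lambda>h. f h x)) \<in> borel_measurable M"
  by (induction n) auto

lemma Gamma_loc_cong:
  "(\<And>h. 1 \<le> h \<Longrightarrow> h \<le> H s \<Longrightarrow> Z c s h \<omega> = Z' c s h \<omega>')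
    \<Longrightarrow> Gamma_loc \<eta> H A Z c s \<omega> = Gamma_loc \<eta> H A Z' c s \<omega>'"
  unfolding Gamma_loc_def by (rule ordprod_cong) simp

lemma Gamma_avg_cong:
  "(\<And>c h. c < N \<Longrightarrow> 1 \<le> h \<Longrightarrow> h \<le> H s \<Longrightarrow> Z c s h \<omega> = Z' c s h \<omega>')
    \<Longrightarrow> Gamma_avg N \<eta> H A Z s \<omega> = Gamma_avg N \<eta> H A Z' s \<omega>'"
  unfolding Gamma_avg_def by (intro arg_cong[where f="scaleR _"] sum.cong refl Gamma_loc_cong) auto

lemma borel_measurable_Gamma_loc:
  assumes "A c \<in> borel_measurable Q" and "\<And>h. 1 \<le> h \<Longrightarrow> h \<le> H s \<Longrightarrow> Z c s h \<in> measurable M Q"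
  shows "Gamma_loc \<eta> H A Z c s \<in> borel_measurable M"
  unfolding Gamma_loc_def[abs_def]
  by (rule borel_measurable_ordprod) (use assms in measurable)

lemma borel_measurable_Gamma_avg:
  assumes "\<And>c. c < N \<Longrightarrow> A c \<in> borel_measurable (Q c)"
    and "\<And>c h. c < N \<Longrightarrow> 1 \<le> h \<Longrightarrow> h \<le> H s \<Longrightarrow> Z c s h \<in> measurable M (Q c)"
  shows "Gamma_avg N \<eta> H A Z s \<in> borel_measurable M"
proof -
  have "Gamma_loc \<eta> H A Z c s \<in> borel_measurable M" if "c < N" for c
    using that assms by (intro borel_measurable_Gamma_loc) auto
  then show ?thesis
    unfolding Gamma_avg_def[abs_def] by measurable
qed

lemma power_powr_eq: "0 \<le> x \<Longrightarrow> (x ^ n) powr p = (x powr p) ^ n" for x :: real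
  by (induction n) (auto simp: powr_mult)

lemma convex_on_powr_nonneg:
  assumes "1 \<le> p" shows "convex_on {0..} (\<lambda>x::real. x powr p)"
proof (rule convex_onI)
  fix t x y :: real assume t: "0 < t" "t < 1" and x: "x \<in> {0..}" and y: "y \<in> {0..}"
  show "((1 - t) *\<^sub>R x + t *\<^sub>R y) powr p \<le> (1 - t) * x powr p + t * y powr p"
  proof (cases "x = 0 \<or> y = 0")
    case True
    have "(s * z) powr p \<le> s * z powr p" if "0 \<le> s" "s \<le> 1" for s z :: real
      using powr_le_one_le[of s p] that assms by (cases "s = 0") (auto simp: powr_mult mult_right_mono)
    with True t show ?thesis by auto
  next
    case False
    with x y have "x \<in> {0<..}" "y \<in> {0<..}" by auto
    then show ?thesis using convex_onD[OF powr_convex[OF assms], of t x y] t by simp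
  qed
qed (simp add: convex_real_interval)

lemma norm_mean_powr_le:
  fixes x :: "nat \<Rightarrow> 'a::real_normed_vector"
  assumes "1 \<le> p" and "0 < N"
  shows "norm ((1 / real N) *\<^sub>R (\<Sum>c<N. x c)) powr p \<le> (\<Sum>c<N. 1 / real N * norm (x c) powr p)"
proof -
  have "norm ((1 / real N) *\<^sub>R (\<Sum>c<N. x c)) \<le> (\<Sum>c<N. (1 / real N) *\<^sub>R norm (x c))"
    using norm_sum[of x "{..<N}"] by (simp add: divide_right_mono flip: sum_divide_distrib)
  then have "norm ((1 / real N) *\<^sub>R (\<Sum>c<N. x c)) powr p
      \<le> (\<Sum>c<N. (1 / real N) *\<^sub>R norm (x c)) powr p"
    using assms by (intro powr_mono2) auto
  also have "\<dots> \<le> (\<Sum>c<N. 1 / real N * norm (x c) powr p)"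
    by (rule convex_on_sum[OF _ _ convex_on_powr_nonneg[OF assms(1)]]) (use assms in auto)
  finally show ?thesis .
qed

lemma integral_powr_le_of_nn_integral_le:
  fixes f :: "'a \<Rightarrow> real"
  assumes "f \<in> borel_measurable M" "\<And>x. 0 \<le> f x" "0 < p" "0 \<le> C"
    and "(\<integral>\<^sup>+x. ennreal (f x) \<partial>M) \<le> ennreal (C powr p)"
  shows "(\<integral>x. f x \<partial>M) powr (1 / p) \<le> C"
proof -
  have "(\<integral>x. f x \<partial>M) = enn2real (\<integral>\<^sup>+x. ennreal (f x) \<partial>M)"
    using assms by (intro integral_eq_nn_integral) auto
  also have "\<dots> \<le> C powr p"
    using assms by (intro enn2real_leI) auto
  finally have "(\<integral>x. f x \<partial>M) powr (1 / p) \<le> (C powr p) powr (1 / p)"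
    using assms by (intro powr_mono2) auto
  then show ?thesis
    using assms by (simp add: powr_powr)
qed

lemma nn_integral_le_of_integral_powr_le:
  fixes f :: "'a \<Rightarrow> real"
  assumes "integrable M f" "\<And>x. 0 \<le> f x" "0 < p"
    and "(\<integral>x. f x \<partial>M) powr (1 / p) \<le> C"
  shows "(\<integral>\<^sup>+x. ennreal (f x) \<partial>M) \<le> ennreal (C powr p)"
proof -
  have "(\<integral>\<^sup>+x. ennreal (f x) \<partial>M) = ennreal (\<integral>x. f x \<partial>M)"
    using assms by (intro nn_integral_eq_integral) auto
  also have "(\<integral>x. f x \<partial>M) = ((\<integral>x. f x \<partial>M) powr (1 / p)) powr p"
    using assms by (simp add: powr_powr)
  also have "\<dots> \<le> C powr p"
    using assms by (intro powr_mono2) auto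
  finally show ?thesis
    by (simp add: ennreal_leI)
qed

lemma prod_power_one_minus_le_exp:
  fixes x :: "'i \<Rightarrow> real"
  assumes "\<And>i. i \<in> S \<Longrightarrow> x i \<le> 1"
  shows "(\<Prod>i\<in>S. (1 - x i) ^ k i) \<le> exp (- (\<Sum>i\<in>S. x i * real (k i)))"
  using assms
proof (induction S rule: infinite_finite_induct)
  case (insert i S)
  have "(1 - x i) ^ k i \<le> exp (- x i) ^ k i"
    using insert.prems exp_ge_add_one_self[of "- x i"] by (intro power_mono) auto
  also have "\<dots> = exp (- (x i * real (k i)))"
    by (simp flip: exp_of_nat_mult)
  finally have "(1 - x i) ^ k i * (\<Prod>i\<in>S. (1 - x i) ^ k i)
      \<le> exp (- (x i * real (k i))) * exp (- (\<Sum>i\<in>S. x i * real (k i)))"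
    using insert by (intro mult_mono) (auto intro: prod_nonneg)
  with insert.hyps show ?case
    by (simp add: exp_add[symmetric])
qed simp_all

lemma (in prob_space) nn_integral_indep_var_le:
  fixes h :: "'b \<Rightarrow> 'b \<Rightarrow> ennreal"
  assumes ind: "indep_var S X T Y"
    and h: "(\<lambda>(x, y). h x y) \<in> borel_measurable (S \<Otimes>\<^sub>M T)" and g: "g \<in> borel_measurable T"
    and le: "\<And>y. y \<in> space T \<Longrightarrow> (\<integral>\<^sup>+\<omega>. h (X \<omega>) y \<partial>M) \<le> g y"
  shows "(\<integral>\<^sup>+\<omega>. h (X \<omega>) (Y \<omega>) \<partial>M) \<le> (\<integral>\<^sup>+\<omega>. g (Y \<omega>) \<partial>M)"
proof -
  have X: "random_variable S X" and Y: "random_variable T Y"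
    using ind by (rule indep_var_rv1, rule indep_var_rv2)
  interpret PX: prob_space "distr M S X" using X by (rule prob_space_distr)
  interpret PY: prob_space "distr M T Y" using Y by (rule prob_space_distr)
  interpret PXY: pair_sigma_finite "distr M S X" "distr M T Y" ..
  have joint: "distr M S X \<Otimes>\<^sub>M distr M T Y = distr M (S \<Otimes>\<^sub>M T) (\<lambda>\<omega>. (X \<omega>, Y \<omega>))"
    using ind indep_var_distribution_eq by blast
  have "(\<integral>\<^sup>+\<omega>. h (X \<omega>) (Y \<omega>) \<partial>M) = (\<integral>\<^sup>+z. (\<lambda>(x, y). h x y) z \<partial>distr M (S \<Otimes>\<^sub>M T) (\<lambda>\<omega>. (X \<omega>, Y \<omega>)))"
    using X Y h by (subst nn_integral_distr) auto
  also have "\<dots> = (\<integral>\<^sup>+y. (\<integral>\<^sup>+x. h x y \<partial>distr M S X) \<partial>distr M T Y)"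
    using h by (simp add: joint[symmetric] PXY.nn_integral_snd[symmetric])
  also have "\<dots> \<le> (\<integral>\<^sup>+y. g y \<partial>distr M T Y)"
  proof (rule nn_integral_mono)
    fix y assume "y \<in> space (distr M T Y)"
    then have y: "y \<in> space T" by simp
    have "(\<integral>\<^sup>+x. h x y \<partial>distr M S X) = (\<integral>\<^sup>+\<omega>. h (X \<omega>) y \<partial>M)"
      using X h y by (subst nn_integral_distr) auto
    also have "\<dots> \<le> g y"
      using le[OF y] .
    finally show "(\<integral>\<^sup>+x. h x y \<partial>distr M S X) \<le> g y" .
  qed
  also have "\<dots> = (\<integral>\<^sup>+\<omega>. g (Y \<omega>) \<partial>M)"
    using Y g by (subst nn_integral_distr) auto
  finally show ?thesis .
qed

lemma (in prob_space) nn_integral_ordprod_indep_le: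
  fixes G :: "nat \<Rightarrow> 'a \<Rightarrow> real^'d^'d" and \<phi> :: "real^'d \<Rightarrow> ennreal"
  assumes "indep_vars (\<lambda>_. borel) G {1..n}" and \<phi>: "\<phi> \<in> borel_measurable borel"
    and "\<And>h u. 1 \<le> h \<Longrightarrow> h \<le> n \<Longrightarrow> (\<integral>\<^sup>+\<omega>. \<phi> (G h \<omega> *v u) \<partial>M) \<le> r h * \<phi> u"
  shows "(\<integral>\<^sup>+\<omega>. \<phi> (ordprod n (\<lambda>h. G h \<omega>) *v v) \<partial>M) \<le> (\<Prod>h=1..n. r h) * \<phi> v"
  using assms(1,3)
proof (induction n)
  case 0
  then show ?case by (simp add: emeasure_space_1)
next
  case (Suc n)
  have "indep_var (PiM {Suc n} (\<lambda>_. borel)) (\<lambda>\<omega>. \<lambda>i\<in>{Suc n}. G i \<omega>)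
      (PiM {1..n} (\<lambda>_. borel)) (\<lambda>\<omega>. \<lambda>i\<in>{1..n}. G i \<omega>)"
    by (rule indep_var_restrict[OF Suc.prems(1)]) auto
  then have "indep_var borel ((\<lambda>x. x (Suc n)) \<circ> (\<lambda>\<omega>. \<lambda>i\<in>{Suc n}. G i \<omega>))
      borel ((\<lambda>x. ordprod n x) \<circ> (\<lambda>\<omega>. \<lambda>i\<in>{1..n}. G i \<omega>))"
    by (rule indep_var_compose) (auto intro: borel_measurable_ordprod[where f="\<lambda>h x. x h", simplified])
  then have indep: "indep_var borel (G (Suc n)) borel (\<lambda>\<omega>. ordprod n (\<lambda>h. G h \<omega>))"
    by (simp add: comp_def cong: ordprod_cong)
  have "(\<integral>\<^sup>+\<omega>. \<phi> (G (Suc n) \<omega> *v (ordprod n (\<lambda>h. G h \<omega>) *v v)) \<partial>M)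
      \<le> (\<integral>\<^sup>+\<omega>. r (Suc n) * \<phi> (ordprod n (\<lambda>h. G h \<omega>) *v v) \<partial>M)"
    by (rule nn_integral_indep_var_le[OF indep, where h="\<lambda>A P. \<phi> (A *v (P *v v))"])
      (use \<phi> Suc.prems(2)[of "Suc n"] in auto)
  also have "\<dots> \<le> r (Suc n) * ((\<Prod>h=1..n. r h) * \<phi> v)"
    using Suc indep_vars_subset[OF Suc.prems(1)] indep_var_rv2[OF indep] \<phi>
    by (subst nn_integral_cmult) (auto intro: mult_left_mono)
  finally show ?case
    by (simp add: matrix_vector_mul_assoc mult_ac)
qed

lemma (in prob_space) indep_vars_compose_restrict:
  assumes "indep_vars M' X I" and "\<And>j. j \<in> L \<Longrightarrow> K j \<subseteq> I" and "disjoint_family_on K L"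
    and "\<And>j. j \<in> L \<Longrightarrow> f j \<in> measurable (PiM (K j) M') (N j)"
  shows "indep_vars N (\<lambda>j \<omega>. f j (\<lambda>i\<in>K j. X i \<omega>)) L"
  using indep_vars_compose2[OF indep_vars_restrict[OF assms(1-3)] assms(4)] .

lemma nn_integral_id_minus_moment_le:
  fixes B :: "'z \<Rightarrow> real^'d^'d"
  assumes Q: "prob_space Q" and B: "B \<in> borel_measurable Q"
    and K: "\<And>z. z \<in> space Q \<Longrightarrow> norm (B z) \<le> K"
    and p: "0 < p" and e: "0 \<le> e"
    and moment: "(\<integral>z. norm ((mat 1 - e *\<^sub>R B z) *v u) powr p \<partial>Q) powr (1 / p) \<le> C"
  shows "(\<integral>\<^sup>+z. ennreal (norm ((mat 1 - e *\<^sub>R B z) *v u) powr p) \<partial>Q) \<le> ennreal (C powr p)"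
proof -
  interpret prob_space Q by (rule Q)
  have "norm (u - e *\<^sub>R (B z *v u)) \<le> norm u + e * (K * norm u)" if "z \<in> space Q" for z
  proof -
    have "norm (B z *v u) \<le> K * norm u"
      using norm_matrix_vector_mult_le[of "B z" u] K[OF that] by (meson mult_right_mono norm_ge_zero order_trans)
    then show ?thesis
      using norm_triangle_ineq4[of u "e *\<^sub>R (B z *v u)"] e by (simp add: mult_left_mono order_trans)
  qed
  then have "integrable Q (\<lambda>z. norm ((mat 1 - e *\<^sub>R B z) *v u) powr p)"
    unfolding id_minus_matrix_vector_mult using B p
    by (intro integrable_const_bound[where B="(norm u + e * (K * norm u)) powr p"]) (auto intro!: powr_mono2)
  then show ?thesis
    using p moment by (intro nn_integral_le_of_integral_powr_le) auto
qed

text \<open>The moment bound is only assumed for \<open>\<eta>' < \<eta>max\<close>; the endpoint \<open>\<eta> = \<eta>max\<close> follows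
  by Fatou's lemma along a sequence \<open>\<eta>' \<nearrow> \<eta>\<close>.\<close>

lemma nn_integral_step_moment_le:
  fixes B :: "'z \<Rightarrow> real^'d^'d"
  assumes Q: "prob_space Q" and B: "B \<in> borel_measurable Q"
    and K: "\<And>z. z \<in> space Q \<Longrightarrow> norm (B z) \<le> K"
    and p: "0 < p" and a: "0 \<le> a" "\<eta>max * a \<le> 1"
    and moment: "\<And>\<eta>'. 0 < \<eta>' \<Longrightarrow> \<eta>' < \<eta>max \<Longrightarrow>
      (\<integral>z. norm ((mat 1 - \<eta>' *\<^sub>R B z) *v u) powr p \<partial>Q) powr (1 / p) \<le> (1 - \<eta>' * a) * norm u"
    and \<eta>: "0 < \<eta>" "\<eta> \<le> \<eta>max"
  shows "(\<integral>\<^sup>+z. ennreal (norm ((mat 1 - \<eta> *\<^sub>R B z) *v u) powr p) \<partial>Q)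
    \<le> ennreal ((1 - \<eta> * a) powr p) * ennreal (norm u powr p)"
proof -
  define f where "f e z = ennreal (norm (u - e *\<^sub>R (B z *v u)) powr p)" for e z
  have f_meas: "f e \<in> borel_measurable Q" for e
    unfolding f_def using B by measurable
  have rate_nonneg: "0 \<le> 1 - x * a" if "x \<le> \<eta>max" for x
    using mult_right_mono[OF that a(1)] a(2) by linarith
  define e where "e n = \<eta> - \<eta> / real (n + 2)" for n
  have e_rng: "0 < e n" "e n < \<eta>max" for n
  proof -
    have "0 < \<eta> / real (n + 2)" "\<eta> / real (n + 2) < \<eta>"
      using \<eta> by (auto simp: divide_less_eq)
    then show "0 < e n" "e n < \<eta>max"
      unfolding e_def using \<eta> by linarith+
  qed
  have "(\<lambda>n. \<eta> / real (n + 2)) \<longlonglongrightarrow> 0"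
    using LIMSEQ_ignore_initial_segment[OF lim_const_over_n[of \<eta>], of 2] by simp
  then have e_lim: "e \<longlonglongrightarrow> \<eta>"
    unfolding e_def using tendsto_diff[OF tendsto_const] by fastforce
  have "integral\<^sup>N Q (f \<eta>) = (\<integral>\<^sup>+z. liminf (\<lambda>n. f (e n) z) \<partial>Q)"
  proof (intro nn_integral_cong)
    fix z
    have "(\<lambda>n. f (e n) z) \<longlonglongrightarrow> f \<eta> z"
      unfolding f_def using p by (intro tendsto_ennrealI tendsto_intros e_lim) auto
    then show "f \<eta> z = liminf (\<lambda>n. f (e n) z)"
      by (simp add: lim_imp_Liminf)
  qed
  also have "\<dots> \<le> liminf (\<lambda>n. integral\<^sup>N Q (f (e n)))"
    using f_meas by (rule nn_integral_liminf)
  also have "\<dots> \<le> liminf (\<lambda>n. ennreal (((1 - e n * a) * norm u) powr p))"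
    using nn_integral_id_minus_moment_le[OF Q B K p less_imp_le[OF e_rng(1)] moment[OF e_rng]]
    by (intro Liminf_mono always_eventually) (simp add: f_def[abs_def] id_minus_matrix_vector_mult)
  also have "\<dots> = ennreal (((1 - \<eta> * a) * norm u) powr p)"
  proof -
    have "(\<lambda>n. ennreal (((1 - e n * a) * norm u) powr p)) \<longlonglongrightarrow> ennreal (((1 - \<eta> * a) * norm u) powr p)"
      using p rate_nonneg[OF less_imp_le[OF e_rng(2)]]
      by (intro tendsto_ennrealI tendsto_powr2 tendsto_intros e_lim always_eventually) auto
    then show ?thesis
      by (simp add: lim_imp_Liminf)
  qed
  also have "\<dots> = ennreal ((1 - \<eta> * a) powr p) * ennreal (norm u powr p)"
    by (simp add: powr_mult ennreal_mult)
  finally show ?thesis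
    unfolding id_minus_matrix_vector_mult by (simp add: f_def[abs_def])
qed

locale federated_products =
  fixes N :: nat
    and \<pi> :: "nat \<Rightarrow> 'z measure"
    and A :: "nat \<Rightarrow> 'z \<Rightarrow> real^'d^'d"
    and a \<eta>inf p :: real
    and M :: "'w measure"
    and Z :: "nat \<Rightarrow> nat \<Rightarrow> nat \<Rightarrow> 'w \<Rightarrow> 'z"
    and H :: "nat \<Rightarrow> nat"
    and \<eta> :: "nat \<Rightarrow> real"
  assumes N_pos: "N > 0"
    and pi_prob: "\<And>c. c < N \<Longrightarrow> prob_space (\<pi> c)"
    and A_meas: "\<And>c. c < N \<Longrightarrow> A c \<in> borel_measurable (\<pi> c)"
    and A_bdd: "\<exists>K. \<forall>c<N. \<forall>z\<in>space (\<pi> c). norm (A c z) \<le> K"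
    and p_ge: "p \<ge> 1"
    and a_nonneg: "a \<ge> 0" and etainf_a: "\<eta>inf * a \<le> 1"
    and A1: "\<And>c \<eta>' u. c < N \<Longrightarrow> 0 < \<eta>' \<Longrightarrow> \<eta>' < \<eta>inf \<Longrightarrow>
               (\<integral>z. norm ((mat 1 - \<eta>' *\<^sub>R A c z) *v u) powr p \<partial>\<pi> c) powr (1 / p)
                 \<le> (1 - \<eta>' * a) * norm u"
    and M_prob: "prob_space M"
    and Z_indep: "prob_space.indep_vars M (\<lambda>(c, s, h). \<pi> c) (\<lambda>(c, s, h). Z c s h)
                    {(c, s, h). c < N \<and> 1 \<le> s \<and> 1 \<le> h \<and> h \<le> H s}"
    and Z_distr: "\<And>c s h. c < N \<Longrightarrow> 1 \<le> s \<Longrightarrow> 1 \<le> h \<Longrightarrow> h \<le> H s \<Longrightarrow>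
                    distr M (\<pi> c) (Z c s h) = \<pi> c"
    and eta_rng: "\<And>s. 1 \<le> s \<Longrightarrow> 0 < \<eta> s \<and> \<eta> s \<le> \<eta>inf"
begin

sublocale prob_space M
  by (rule M_prob)

lemma rate_nonneg: "1 \<le> s \<Longrightarrow> 0 \<le> 1 - \<eta> s * a"
  using eta_rng[of s] mult_right_mono[OF _ a_nonneg, of "\<eta> s" \<eta>inf] etainf_a by auto

lemma Z_measurable: "c < N \<Longrightarrow> 1 \<le> s \<Longrightarrow> 1 \<le> h \<Longrightarrow> h \<le> H s \<Longrightarrow> Z c s h \<in> measurable M (\<pi> c)"
  using Z_indep unfolding indep_vars_def by auto

lemma measurable_sample_component:
  "(c, s, h) \<in> J \<Longrightarrow> (\<lambda>x. x (c, s, h)) \<in> measurable (PiM J (\<lambda>(c, s, h). \<pi> c)) (\<pi> c)"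
  using measurable_component_singleton[of "(c, s, h)" J "\<lambda>(c, s, h). \<pi> c"] by simp

lemma local_factor_moment_le:
  assumes "c < N" "1 \<le> s" "1 \<le> h" "h \<le> H s"
  shows "(\<integral>\<^sup>+\<omega>. ennreal (norm ((mat 1 - \<eta> s *\<^sub>R A c (Z c s h \<omega>)) *v u) powr p) \<partial>M)
    \<le> ennreal ((1 - \<eta> s * a) powr p) * ennreal (norm u powr p)"
proof -
  obtain K where K: "\<forall>c<N. \<forall>z\<in>space (\<pi> c). norm (A c z) \<le> K"
    using A_bdd by blast
  have "(\<integral>\<^sup>+\<omega>. ennreal (norm ((mat 1 - \<eta> s *\<^sub>R A c (Z c s h \<omega>)) *v u) powr p) \<partial>M)
      = (\<integral>\<^sup>+z. ennreal (norm ((mat 1 - \<eta> s *\<^sub>R A c z) *v u) powr p) \<partial>distr M (\<pi> c) (Z c s h))"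
    using Z_measurable[OF assms] A_meas[OF assms(1)] by (subst nn_integral_distr) auto
  also have "\<dots> = (\<integral>\<^sup>+z. ennreal (norm ((mat 1 - \<eta> s *\<^sub>R A c z) *v u) powr p) \<partial>\<pi> c)"
    using Z_distr[OF assms] by simp
  also have "\<dots> \<le> ennreal ((1 - \<eta> s * a) powr p) * ennreal (norm u powr p)"
    using K assms eta_rng[OF assms(2)] p_ge
    by (intro nn_integral_step_moment_le[OF pi_prob A_meas _ _ a_nonneg etainf_a A1]) auto
  finally show ?thesis .
qed

lemma indep_local_factors:
  assumes "c < N" "1 \<le> s"
  shows "indep_vars (\<lambda>_. borel) (\<lambda>h \<omega>. mat 1 - \<eta> s *\<^sub>R A c (Z c s h \<omega>)) {1..H s}"
proof -
  have "indep_vars (\<lambda>_. borel)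
      (\<lambda>h \<omega>. (\<lambda>x. mat 1 - \<eta> s *\<^sub>R A c (x (c, s, h))) (\<lambda>i\<in>{(c, s, h)}. (\<lambda>(c, s, h). Z c s h) i \<omega>)) {1..H s}"
  proof (rule indep_vars_compose_restrict[OF Z_indep])
    fix h assume "h \<in> {1..H s}"
    have "(\<lambda>x. x (c, s, h)) \<in> measurable (PiM {(c, s, h)} (\<lambda>(c, s, h). \<pi> c)) (\<pi> c)"
      by (rule measurable_sample_component) simp
    then show "(\<lambda>x. mat 1 - \<eta> s *\<^sub>R A c (x (c, s, h))) \<in> borel_measurable (PiM {(c, s, h)} (\<lambda>(c, s, h). \<pi> c))"
      using A_meas[OF assms(1)] by measurable
  qed (use assms in \<open>auto simp: disjoint_family_on_def\<close>)
  then show ?thesis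
    by simp
qed

lemma Gamma_loc_moment_le:
  assumes "c < N" "1 \<le> s"
  shows "(\<integral>\<^sup>+\<omega>. ennreal (norm (Gamma_loc \<eta> H A Z c s \<omega> *v u) powr p) \<partial>M)
    \<le> ennreal (((1 - \<eta> s * a) ^ H s) powr p) * ennreal (norm u powr p)"
proof -
  have "(\<integral>\<^sup>+\<omega>. ennreal (norm (Gamma_loc \<eta> H A Z c s \<omega> *v u) powr p) \<partial>M)
      \<le> (\<Prod>h=1..H s. ennreal ((1 - \<eta> s * a) powr p)) * ennreal (norm u powr p)"
    unfolding Gamma_loc_def using assms
    by (intro nn_integral_ordprod_indep_le[OF indep_local_factors] local_factor_moment_le) auto
  also have "(\<Prod>h=1..H s. ennreal ((1 - \<eta> s * a) powr p)) = ennreal (((1 - \<eta> s * a) ^ H s) powr p)"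
    using rate_nonneg[OF assms(2)] by (simp add: ennreal_power power_powr_eq)
  finally show ?thesis .
qed

lemma Gamma_avg_moment_le:
  assumes "1 \<le> s"
  shows "(\<integral>\<^sup>+\<omega>. ennreal (norm (Gamma_avg N \<eta> H A Z s \<omega> *v u) powr p) \<partial>M)
    \<le> ennreal (((1 - \<eta> s * a) ^ H s) powr p) * ennreal (norm u powr p)"
    (is "_ \<le> ?R")
proof -
  define m where "m c \<omega> = ennreal (norm (Gamma_loc \<eta> H A Z c s \<omega> *v u) powr p)" for c \<omega>
  have m_meas: "m c \<in> borel_measurable M" if "c < N" for c
  proof -
    have "Gamma_loc \<eta> H A Z c s \<in> borel_measurable M"
      using that assms by (intro borel_measurable_Gamma_loc[where Q="\<pi> c"] A_meas Z_measurable) auto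
    then show ?thesis
      unfolding m_def by measurable
  qed
  have "ennreal (norm (Gamma_avg N \<eta> H A Z s \<omega> *v u) powr p) \<le> (\<Sum>c<N. ennreal (1 / real N) * m c \<omega>)" for \<omega>
  proof -
    have "Gamma_avg N \<eta> H A Z s \<omega> *v u = (1 / real N) *\<^sub>R (\<Sum>c<N. Gamma_loc \<eta> H A Z c s \<omega> *v u)"
      by (simp add: Gamma_avg_def sum_matrix_vector_mult flip: scaleR_matrix_vector_assoc)
    then show ?thesis
      using norm_mean_powr_le[OF p_ge N_pos, of "\<lambda>c. Gamma_loc \<eta> H A Z c s \<omega> *v u"] by (simp add: m_def ennreal_leI flip: ennreal_mult)
  qed
  then have "(\<integral>\<^sup>+\<omega>. ennreal (norm (Gamma_avg N \<eta> H A Z s \<omega> *v u) powr p) \<partial>M)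
      \<le> (\<integral>\<^sup>+\<omega>. (\<Sum>c<N. ennreal (1 / real N) * m c \<omega>) \<partial>M)"
    by (intro nn_integral_mono)
  also have "\<dots> = (\<Sum>c<N. ennreal (1 / real N) * integral\<^sup>N M (m c))"
    using m_meas by (subst nn_integral_sum) (auto simp: nn_integral_cmult)
  also have "\<dots> \<le> (\<Sum>c<N. ennreal (1 / real N) * ?R)"
    using Gamma_loc_moment_le[OF _ assms] by (intro sum_mono mult_left_mono) (auto simp: m_def[abs_def])
  also have "\<dots> = ?R"
    using N_pos by (simp add: ennreal_of_nat_eq_real_of_nat mult.assoc[symmetric] flip: ennreal_mult)
  finally show ?thesis .
qed

lemma indep_Gamma_avg: "indep_vars (\<lambda>_. borel) (Gamma_avg N \<eta> H A Z) {1..}"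
proof -
  \<comment> \<open>Round \<open>s\<close> is \<open>Gamma_avg\<close> evaluated on the sample array \<open>x\<close>, a function of the block \<open>K s\<close> only.\<close>
  define K where "K s = {(c, s', h). s' = s \<and> c < N \<and> 1 \<le> h \<and> h \<le> H s}" for s
  have "indep_vars (\<lambda>_. borel) (\<lambda>s \<omega>. Gamma_avg N \<eta> H A (\<lambda>c s h x. x (c, s, h)) s
      (\<lambda>i\<in>K s. (\<lambda>(c, s, h). Z c s h) i \<omega>)) {1..}"
  proof (rule indep_vars_compose_restrict[OF Z_indep])
    fix s :: nat assume "s \<in> {1..}"
    then show "K s \<subseteq> {(c, s, h). c < N \<and> 1 \<le> s \<and> 1 \<le> h \<and> h \<le> H s}"
      by (auto simp: K_def)
    show "Gamma_avg N \<eta> H A (\<lambda>c s h x. x (c, s, h)) s \<in> borel_measurable (PiM (K s) (\<lambda>(c, s, h). \<pi> c))"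
      by (rule borel_measurable_Gamma_avg[OF A_meas measurable_sample_component]) (auto simp: K_def)
  qed (auto simp: K_def disjoint_family_on_def)
  moreover have "Gamma_avg N \<eta> H A (\<lambda>c s h x. x (c, s, h)) s (\<lambda>i\<in>K s. (\<lambda>(c, s, h). Z c s h) i \<omega>)
      = Gamma_avg N \<eta> H A Z s \<omega>" for s \<omega>
    by (rule Gamma_avg_cong) (simp add: K_def)
  ultimately show ?thesis
    by simp
qed

theorem moment_ordprod_Gamma_avg_le:
  "(\<integral>\<omega>. norm (ordprod t (\<lambda>s. Gamma_avg N \<eta> H A Z s \<omega>) *v v) powr p \<partial>M) powr (1 / p)
    \<le> exp (- a * (\<Sum>s = 1..t. \<eta> s * real (H s))) * norm v"
proof -
  define q where "q s = (1 - \<eta> s * a) ^ H s" for s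
  have q_nonneg: "0 \<le> q s" if "s \<in> {1..t}" for s
    using rate_nonneg that by (simp add: q_def)
  then have prod_q_nonneg: "0 \<le> prod q {1..t}"
    by (rule prod_nonneg)
  have "(\<integral>\<^sup>+\<omega>. ennreal (norm (ordprod t (\<lambda>s. Gamma_avg N \<eta> H A Z s \<omega>) *v v) powr p) \<partial>M)
      \<le> (\<Prod>s=1..t. ennreal (q s powr p)) * ennreal (norm v powr p)"
    unfolding q_def
    by (intro nn_integral_ordprod_indep_le[OF indep_vars_subset[OF indep_Gamma_avg]] Gamma_avg_moment_le) auto
  also have "\<dots> = ennreal ((prod q {1..t} * norm v) powr p)"
    using q_nonneg by (simp add: prod_ennreal prod_powr_distrib powr_mult flip: ennreal_mult'')
  moreover have "(\<lambda>\<omega>. ordprod t (\<lambda>s. Gamma_avg N \<eta> H A Z s \<omega>)) \<in> borel_measurable M"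
    by (intro borel_measurable_ordprod borel_measurable_Gamma_avg[where Q=\<pi>] A_meas Z_measurable) auto
  ultimately have "(\<integral>\<omega>. norm (ordprod t (\<lambda>s. Gamma_avg N \<eta> H A Z s \<omega>) *v v) powr p \<partial>M) powr (1 / p)
      \<le> prod q {1..t} * norm v"
    using p_ge prod_q_nonneg by (intro integral_powr_le_of_nn_integral_le) auto
  also have "\<dots> \<le> exp (- a * (\<Sum>s = 1..t. \<eta> s * real (H s))) * norm v"
  proof (rule mult_right_mono)
    have "prod q {1..t} \<le> exp (- (\<Sum>s = 1..t. \<eta> s * a * real (H s)))"
      unfolding q_def using rate_nonneg by (intro prod_power_one_minus_le_exp) auto
    then show "prod q {1..t} \<le> exp (- a * (\<Sum>s = 1..t. \<eta> s * real (H s)))"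
      by (simp add: sum_distrib_left sum_negf mult_ac)
  qed simp
  finally show ?thesis .
qed

end

theorem lemma6:
  fixes N :: nat
    and Zsp :: "'z measure"
    and \<pi> :: "nat \<Rightarrow> 'z measure"
    and A :: "nat \<Rightarrow> 'z \<Rightarrow> real^'d^'d"
    and b :: "nat \<Rightarrow> 'z \<Rightarrow> real^'d"
    and \<theta>star :: "real^'d"
    and \<theta>c :: "nat \<Rightarrow> real^'d"
    and a \<eta>inf p :: real
    and M :: "'w measure"
    and Z :: "nat \<Rightarrow> nat \<Rightarrow> nat \<Rightarrow> 'w \<Rightarrow> 'z"
    and H :: "nat \<Rightarrow> nat"
    and \<eta> :: "nat \<Rightarrow> real"
    and \<theta>0 :: "real^'d"
    and t :: nat
  defines "Abar \<equiv> \<lambda>c. \<integral>z. A c z \<partial>\<pi> c"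
    and "bbar \<equiv> \<lambda>c. \<integral>z. b c z \<partial>\<pi> c"
  assumes N_pos: "N > 0"
    and pi_prob: "\<And>c. c < N \<Longrightarrow> prob_space (\<pi> c)"
    and pi_sets: "\<And>c. c < N \<Longrightarrow> sets (\<pi> c) = sets Zsp"
    and A_meas: "\<And>c. c < N \<Longrightarrow> A c \<in> borel_measurable Zsp"
    and b_meas: "\<And>c. c < N \<Longrightarrow> b c \<in> borel_measurable Zsp"
    and theta_star: "((1 / real N) *\<^sub>R (\<Sum>c<N. Abar c)) *v \<theta>star = (1 / real N) *\<^sub>R (\<Sum>c<N. bbar c)"
    and theta_c: "\<And>c. c < N \<Longrightarrow> Abar c *v \<theta>c c = bbar c"
    \<comment> \<open>Assumption A1(p)\<close>
    and p_ge: "p \<ge> 1"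
    and hurw: "\<And>c. c < N \<Longrightarrow> hurwitz (- Abar c)"
    and a_pos: "a > 0" and etainf_pos: "\<eta>inf > 0" and etainf_a: "\<eta>inf * a \<le> 1/2"
    and A1: "\<And>c \<eta>' u. c < N \<Longrightarrow> 0 < \<eta>' \<Longrightarrow> \<eta>' < \<eta>inf \<Longrightarrow>
               (\<integral>z. norm ((mat 1 - \<eta>' *\<^sub>R A c z) *v u) powr p \<partial>\<pi> c) powr (1 / p)
                 \<le> (1 - \<eta>' * a) * norm u"
    \<comment> \<open>Assumption A2\<close>
    and M_prob: "prob_space M"
    and Z_indep: "prob_space.indep_vars M (\<lambda>(c, s, h). \<pi> c) (\<lambda>(c, s, h). Z c s h)
                    {(c, s, h). c < N \<and> 1 \<le> s \<and> 1 \<le> h \<and> h \<le> H s}"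
    and Z_distr: "\<And>c s h. c < N \<Longrightarrow> 1 \<le> s \<Longrightarrow> 1 \<le> h \<Longrightarrow> h \<le> H s \<Longrightarrow>
                    distr M (\<pi> c) (Z c s h) = \<pi> c"
    and eps_bdd: "\<exists>K. \<forall>c<N. \<forall>z\<in>space Zsp.
                    norm ((A c z - Abar c) *v \<theta>c c - (b c z - bbar c)) \<le> K"
    and A_bdd: "\<exists>K. \<forall>c<N. \<forall>z\<in>space Zsp. norm (A c z) \<le> K \<and> norm (A c z - Abar c) \<le> K"
    \<comment> \<open>step sizes\<close>
    and eta_rng: "\<And>s. 1 \<le> s \<Longrightarrow> 0 < \<eta> s \<and> \<eta> s \<le> \<eta>inf"
    and t_ge: "t \<ge> 1"
  shows "(\<integral>\<omega>. norm (ordprod t (\<lambda>s. Gamma_avg N \<eta> H A Z s \<omega>) *v (\<theta>0 - \<theta>star)) powr p \<partial>M)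
            powr (1 / p)
         \<le> exp (- a * (\<Sum>s = 1..t. \<eta> s * real (H s))) * norm (\<theta>0 - \<theta>star)"
proof -
  have A_meas': "A c \<in> borel_measurable (\<pi> c)" if "c < N" for c
    using A_meas[OF that] by (simp add: measurable_cong_sets[OF pi_sets[OF that] refl])
  have A_bdd': "\<exists>K. \<forall>c<N. \<forall>z\<in>space (\<pi> c). norm (A c z) \<le> K"
    using A_bdd sets_eq_imp_space_eq[OF pi_sets] by metis
  have a_nonneg: "a \<ge> 0" and etainf_a': "\<eta>inf * a \<le> 1"
    using a_pos etainf_a by simp_all
  interpret federated_products N \<pi> A a \<eta>inf p M Z H \<eta>
    by (rule federated_products.intro[OF N_pos pi_prob A_meas' A_bdd' p_ge a_nonneg etainf_a' A1
          M_prob Z_indep Z_distr eta_rng])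
  show ?thesis
    by (rule moment_ordprod_Gamma_avg_le)
qed

end
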